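(* Let $p,q\in(0,1/2)$. If $K_{pq}$ is a twofold Cantor set, then $\frac{\log p}{\log q}\notin\mathbb Q$.
   Context: For $p,q\in(0,1/2)$ let $S_1(x)=px$, $S_2(x)=qx$, $S_3(x)=px+1-p$, $S_4(x)=qx+1-q$, let $K_{pq}$ be the attractor of $\{S_1,S_2,S_3,S_4\}$ (the unique nonempty compact $K\subset\mathbb R$ with $K=\bigcup_{i=1}^4S_i(K)$), and let $A=S_3(K_{pq})\cup S_4(K_{pq})$. $K_{pq}$ is called a twofold Cantor set if $S_1^m(A)\cap S_2^n(A)=\varnothing$ for all $m,n\in\mathbb N$. *)

theory Defs
  imports "HOL-Analysis.Analysis"
begin

definition S1 :: "real \<Rightarrow> real \<Rightarrow> real" where "S1 p x = p * x"
definition S2 :: "real \<Rightarrow> real \<Rightarrow> real" where "S2 q x = q * x"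
definition S3 :: "real \<Rightarrow> real \<Rightarrow> real" where "S3 p x = p * x + 1 - p"
definition S4 :: "real \<Rightarrow> real \<Rightarrow> real" where "S4 q x = q * x + 1 - q"

definition Kpq :: "real \<Rightarrow> real \<Rightarrow> real set" where
  "Kpq p q = (THE K. K \<noteq> {} \<and> compact K \<and>
      K = S1 p ` K \<union> S2 q ` K \<union> S3 p ` K \<union> S4 q ` K)"

definition Aset :: "real \<Rightarrow> real \<Rightarrow> real set" where
  "Aset p q = S3 p ` Kpq p q \<union> S4 q ` Kpq p q"

definition twofold_cantor :: "real \<Rightarrow> real \<Rightarrow> bool" where
  "twofold_cantor p q \<longleftrightarrow>
     (\<forall>m n :: nat. m \<ge> 1 \<longrightarrow> n \<ge> 1 \<longrightarrow>
        ((S1 p ^^ m) ` Aset p q) \<inter> ((S2 q ^^ n) ` Aset p q) = {})"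

end

(*
  If ln p / ln q = a / b with a, b > 0, then p^b = q^a, so S1^b and S2^a are the same map
  x \<mapsto> p^b x and S1^b(A) = S2^a(A), which is nonempty as soon as the attractor is.
  The real content is therefore the existence and uniqueness of the attractor of a finite
  family of contractions (uniqueness is what gives meaning to the THE in the definition of
  K_pq): two invariant compacta approximate each other up to c^n D for every n, and the
  closure of the orbit of a fixed point of one of the maps is a bounded invariant set.
*)
theory Submission
  imports Defs
begin

definition hutchinson :: "('a \<Rightarrow> 'a) set \<Rightarrow> 'a set \<Rightarrow> 'a set" where
  "hutchinson F K = (\<Union>f\<in>F. f ` K)"

locale contracting_ifs =
  fixes F :: "('a::metric_space \<Rightarrow> 'a) set" and c :: real
  assumes finite_maps: "finite F"
    and maps_nonempty: "F \<noteq> {}"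
    and factor_less_one: "c < 1"
    and lipschitz_maps: "f \<in> F \<Longrightarrow> c-lipschitz_on UNIV f"
begin

lemma factor_nonneg: "0 \<le> c"
  using maps_nonempty lipschitz_maps lipschitz_on_nonneg by blast

lemma dist_map_le: "f \<in> F \<Longrightarrow> dist (f x) (f y) \<le> c * dist x y"
  using lipschitz_maps lipschitz_onD by blast

lemma approximates_invariant:
  assumes K: "hutchinson F K = K" and K': "hutchinson F K' = K'" "K' \<noteq> {}"
    and D: "\<forall>x\<in>K. \<forall>y\<in>K'. dist x y \<le> D"
  shows "\<forall>x\<in>K. \<exists>y\<in>K'. dist x y \<le> c ^ n * D"
proof (induction n)
  case 0
  then show ?case using K'(2) D by auto
next
  case (Suc n)
  show ?case
  proof
    fix x assume "x \<in> K"
    then obtain f x' where f: "f \<in> F" and x': "x' \<in> K" and x: "x = f x'"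
      using K unfolding hutchinson_def by blast
    obtain y' where y': "y' \<in> K'" "dist x' y' \<le> c ^ n * D"
      using Suc x' by blast
    have "f y' \<in> K'"
      using K'(1) f y'(1) unfolding hutchinson_def by blast
    moreover have "dist x (f y') \<le> c ^ Suc n * D"
    proof -
      have "dist x (f y') \<le> c * dist x' y'" using dist_map_le[OF f] x by simp
      also have "\<dots> \<le> c * (c ^ n * D)" using y'(2) factor_nonneg by (rule mult_left_mono)
      finally show ?thesis by simp
    qed
    ultimately show "\<exists>y\<in>K'. dist x y \<le> c ^ Suc n * D" by blast
  qed
qed

lemma invariant_compact_subset:
  assumes K: "compact K" "hutchinson F K = K"
    and K': "compact K'" "K' \<noteq> {}" "hutchinson F K' = K'"
  shows "K \<subseteq> K'"
proof
  fix x assume x: "x \<in> K"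
  obtain D where D: "\<forall>x\<in>K \<union> K'. \<forall>y\<in>K \<union> K'. dist x y \<le> D"
    using K(1) K'(1) by (meson bounded_two_points compact_Un compact_imp_bounded)
  have approx: "\<exists>y\<in>K'. dist x y \<le> c ^ n * D" for n
    using approximates_invariant[OF K(2) K'(3,2)] D x by blast
  have "infdist x K' \<le> c ^ n * D" for n
    using approx[of n] infdist_le order_trans by blast
  moreover have "(\<lambda>n. c ^ n * D) \<longlonglongrightarrow> 0"
    using factor_nonneg factor_less_one by (intro tendsto_mult_left_zero LIMSEQ_power_zero) simp
  ultimately have "infdist x K' \<le> 0"
    by (intro LIMSEQ_le_const) auto
  then show "x \<in> K'"
    using in_closed_iff_infdist_zero[OF compact_imp_closed[OF K'(1)] K'(2)] infdist_nonneg
    by (metis antisym)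
qed

inductive_set orbit :: "'a \<Rightarrow> 'a set" for x\<^sub>0 where
  start: "x\<^sub>0 \<in> orbit x\<^sub>0"
| step: "x \<in> orbit x\<^sub>0 \<Longrightarrow> f \<in> F \<Longrightarrow> f x \<in> orbit x\<^sub>0"

lemma bounded_orbit: "bounded (orbit x\<^sub>0)"
proof -
  define M where "M = Max ((\<lambda>f. dist x\<^sub>0 (f x\<^sub>0)) ` F)"
  define R where "R = M / (1 - c)"
  have M: "dist x\<^sub>0 (f x\<^sub>0) \<le> M" if "f \<in> F" for f
    unfolding M_def using finite_maps that by (intro Max_ge) auto
  have "M \<ge> 0" using M maps_nonempty zero_le_dist order_trans by blast
  have R: "M + c * R = R" "0 \<le> R"
    using factor_less_one \<open>M \<ge> 0\<close> unfolding R_def by (auto simp: field_simps)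
  have "x \<in> cball x\<^sub>0 R" if "x \<in> orbit x\<^sub>0" for x
    using that
  proof (induction rule: orbit.induct)
    case start
    then show ?case using R by simp
  next
    case (step x f)
    have "dist x\<^sub>0 (f x) \<le> dist x\<^sub>0 (f x\<^sub>0) + dist (f x\<^sub>0) (f x)" by (rule dist_triangle)
    also have "\<dots> \<le> M + c * R"
    proof (rule add_mono)
      show "dist x\<^sub>0 (f x\<^sub>0) \<le> M" by (rule M[OF step(2)])
      have "c * dist x\<^sub>0 x \<le> c * R" using step(3) factor_nonneg by (simp add: mult_left_mono)
      then show "dist (f x\<^sub>0) (f x) \<le> c * R" using dist_map_le[OF step(2), of x\<^sub>0 x] by linarith
    qed
    finally show ?case using R by simp
  qed
  then show ?thesis by (meson bounded_cball bounded_subset subsetI)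
qed

lemma orbit_of_fixed_point_invariant:
  assumes "f\<^sub>0 \<in> F" "f\<^sub>0 x\<^sub>0 = x\<^sub>0"
  shows "hutchinson F (orbit x\<^sub>0) = orbit x\<^sub>0"
proof
  show "hutchinson F (orbit x\<^sub>0) \<subseteq> orbit x\<^sub>0"
    unfolding hutchinson_def using orbit.step by blast
  show "orbit x\<^sub>0 \<subseteq> hutchinson F (orbit x\<^sub>0)"
  proof
    fix x assume "x \<in> orbit x\<^sub>0"
    then show "x \<in> hutchinson F (orbit x\<^sub>0)"
    proof cases
      case start
      then show ?thesis using assms orbit.start unfolding hutchinson_def by (metis UN_I image_eqI)
    qed (auto simp: hutchinson_def)
  qed
qed

lemma hutchinson_closure:
  assumes "compact (closure P)"
  shows "hutchinson F (closure P) = closure (hutchinson F P)"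
proof
  have cont: "continuous_on UNIV f" if "f \<in> F" for f
    using lipschitz_on_continuous_on lipschitz_maps that by blast
  show "hutchinson F (closure P) \<subseteq> closure (hutchinson F P)"
    unfolding hutchinson_def
  proof (intro UN_least)
    fix f assume "f \<in> F"
    then have "f ` closure P \<subseteq> closure (f ` P)"
      using cont continuous_image_closure_subset by blast
    also have "\<dots> \<subseteq> closure (\<Union>f\<in>F. f ` P)"
      using \<open>f \<in> F\<close> by (intro closure_mono) blast
    finally show "f ` closure P \<subseteq> closure (\<Union>f\<in>F. f ` P)" .
  qed
  have "compact (hutchinson F (closure P))"
    unfolding hutchinson_def using finite_maps assms cont
    by (intro compact_UN compact_continuous_image) (auto intro: continuous_on_subset)
  moreover have "hutchinson F P \<subseteq> hutchinson F (closure P)"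
    unfolding hutchinson_def using closure_subset by blast
  ultimately show "closure (hutchinson F P) \<subseteq> hutchinson F (closure P)"
    by (intro closure_minimal compact_imp_closed)
qed

end

lemma ex1_attractor:
  fixes F :: "('a::heine_borel \<Rightarrow> 'a) set"
  assumes "contracting_ifs F c"
  shows "\<exists>!K. K \<noteq> {} \<and> compact K \<and> hutchinson F K = K"
proof -
  interpret contracting_ifs F c by fact
  obtain f\<^sub>0 where f\<^sub>0: "f\<^sub>0 \<in> F" using maps_nonempty by blast
  \<comment> \<open>starting at a fixed point makes the orbit invariant, not only forward invariant\<close>
  obtain x\<^sub>0 where x\<^sub>0: "f\<^sub>0 x\<^sub>0 = x\<^sub>0"
    using banach_fix_type[OF factor_nonneg factor_less_one] dist_map_le[OF f\<^sub>0] by blast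
  define K where "K = closure (orbit x\<^sub>0)"
  have "compact K" unfolding K_def using bounded_orbit by simp
  moreover have "K \<noteq> {}" unfolding K_def using orbit.start closure_subset by blast
  moreover have "hutchinson F K = K"
    using hutchinson_closure[OF \<open>compact K\<close>[unfolded K_def]]
      orbit_of_fixed_point_invariant[OF f\<^sub>0 x\<^sub>0] unfolding K_def by simp
  ultimately show ?thesis
    using invariant_compact_subset by (intro ex_ex1I) (blast, meson subset_antisym)
qed

lemma similitude_lipschitz_on:
  fixes f :: "real \<Rightarrow> real"
  assumes "\<bar>a\<bar> \<le> c" "\<And>x y. f x - f y = a * (x - y)"
  shows "c-lipschitz_on U f"
  using assms by (intro lipschitz_onI) (auto simp: dist_real_def abs_mult intro: mult_right_mono)

lemma funpow_S1: "S1 p ^^ n = S1 (p ^ n)"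
  by (induction n) (auto simp: S1_def)

lemma funpow_S2: "S2 q ^^ n = S2 (q ^ n)"
  by (induction n) (auto simp: S2_def)

lemma contracting_ifs_S:
  assumes "\<bar>p\<bar> < 1" "\<bar>q\<bar> < 1"
  shows "contracting_ifs {S1 p, S2 q, S3 p, S4 q} (max \<bar>p\<bar> \<bar>q\<bar>)"
proof
  have "(max \<bar>p\<bar> \<bar>q\<bar>)-lipschitz_on UNIV (S1 p)" "(max \<bar>p\<bar> \<bar>q\<bar>)-lipschitz_on UNIV (S3 p)"
    by (rule similitude_lipschitz_on[of p]; simp add: S1_def S3_def algebra_simps)+
  moreover have "(max \<bar>p\<bar> \<bar>q\<bar>)-lipschitz_on UNIV (S2 q)" "(max \<bar>p\<bar> \<bar>q\<bar>)-lipschitz_on UNIV (S4 q)"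
    by (rule similitude_lipschitz_on[of q]; simp add: S2_def S4_def algebra_simps)+
  ultimately show "(max \<bar>p\<bar> \<bar>q\<bar>)-lipschitz_on UNIV f" if "f \<in> {S1 p, S2 q, S3 p, S4 q}" for f
    using that by blast
qed (use assms in auto)

lemma Kpq_attractor:
  assumes "\<bar>p\<bar> < 1" "\<bar>q\<bar> < 1"
  shows "Kpq p q \<noteq> {} \<and> compact (Kpq p q) \<and>
    Kpq p q = S1 p ` Kpq p q \<union> S2 q ` Kpq p q \<union> S3 p ` Kpq p q \<union> S4 q ` Kpq p q"
proof -
  have "hutchinson {S1 p, S2 q, S3 p, S4 q} K = K \<longleftrightarrow>
      K = S1 p ` K \<union> S2 q ` K \<union> S3 p ` K \<union> S4 q ` K" for K
    unfolding hutchinson_def by auto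
  then show ?thesis
    using theI'[OF ex1_attractor[OF contracting_ifs_S[OF assms]]] unfolding Kpq_def
    by presburger
qed

lemma rational_log_ratio_imp_equal_powers:
  fixes p q :: real
  assumes "0 < p" "p < 1" "0 < q" "q < 1" "ln p / ln q \<in> \<rat>"
  obtains m n :: nat where "0 < m" "0 < n" "p ^ m = q ^ n"
proof -
  obtain a b :: int where ab: "b > 0" "ln p / ln q = of_int a / of_int b"
    using assms(5) by (rule Rats_cases')
  have "ln p < 0" "ln q < 0" using assms by auto
  then have "0 < of_int a / (of_int b :: real)"
    using ab(2) by (metis divide_neg_neg)
  then have "a > 0" using ab(1) by (simp add: zero_less_divide_iff)
  have "ln p * b = a * ln q"
    using ab \<open>ln q < 0\<close> by (simp add: field_simps)
  then have "ln (p ^ nat b) = ln (q ^ nat a)"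
    using assms \<open>a > 0\<close> ab(1) by (simp add: ln_realpow mult.commute)
  then have "p ^ nat b = q ^ nat a"
    using assms by simp
  then show ?thesis using that[of "nat b" "nat a"] \<open>a > 0\<close> ab(1) by simp
qed

theorem proposition5:
  fixes p q :: real
  assumes "0 < p" "p < 1/2" "0 < q" "q < 1/2"
    and "twofold_cantor p q"
  shows "ln p / ln q \<notin> \<rat>"
proof
  assume rational: "ln p / ln q \<in> \<rat>"
  obtain m n where mn: "0 < m" "0 < n" "p ^ m = q ^ n"
    by (rule rational_log_ratio_imp_equal_powers[OF _ _ _ _ rational]) (use assms in auto)
  obtain k where "k \<in> Kpq p q"
    using Kpq_attractor[of p q] assms(1-4) by auto
  then have "S3 p k \<in> Aset p q" unfolding Aset_def by blast
  moreover have "(S1 p ^^ m) (S3 p k) = (S2 q ^^ n) (S3 p k)"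
    unfolding funpow_S1 funpow_S2 mn(3) by (simp add: S1_def S2_def)
  ultimately have "(S1 p ^^ m) ` Aset p q \<inter> (S2 q ^^ n) ` Aset p q \<noteq> {}"
    by (metis disjoint_iff image_eqI)
  then show False
    using assms(5) mn(1,2) unfolding twofold_cantor_def by simp
qed

end
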